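(* Let $q$ be an odd prime power, let $f$ be a planar function on $\mathbb F_{q^2}$ and let $\theta=\theta_0+\theta_1\xi\in\mathbb F_{q^2}^*$ ($\theta_0,\theta_1\in\mathbb F_q$). Assume that for every $c\in\mathbb F_q$, \[\#\{x\in\mathbb F_{q^2}:\theta_1 f_0(x)-\theta_0 f_1(x)=c\}=\begin{cases} q+1, & c\neq 0,\\ 1, & c=0.\end{cases}\] Then the set \[\mathcal U_\theta:=\{(x,t\theta):x\in\mathbb F_{q^2},\ t\in\mathbb F_q\}\cup\{(\infty)\}\] is a unital in $\Pi(f)$. Furthermore, for $a,b\in\mathbb F_{q^2}$ with $b=b_0+b_1\xi$ ($b_0,b_1\in\mathbb F_q$), the line $L_{a,b}$ is a tangent line to $\mathcal U_\theta$ if and only if $b_0\theta_1-b_1\theta_0=0$.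
   Context: A function $f:\mathbb F_{q^2}\to\mathbb F_{q^2}$ is planar if for every $a\neq 0$ the map $x\mapsto f(x+a)-f(x)$ is a bijection. For planar $f$, $\Pi(f)$ is the projective plane with points $(x,y)\in\mathbb F_{q^2}^2$ and $(a)$ for $a\in\mathbb F_{q^2}\cup\{\infty\}$, and lines $L_{a,b}=\{(x,f(x+a)-b):x\in\mathbb F_{q^2}\}\cup\{(a)\}$ ($a,b\in\mathbb F_{q^2}$), $N_a=\{(a,y):y\in\mathbb F_{q^2}\}\cup\{(\infty)\}$ ($a\in\mathbb F_{q^2}$), $L_\infty=\{(a):a\in\mathbb F_{q^2}\cup\{\infty\}\}$, with incidence given by membership. A unital in $\Pi(f)$ is a set of $q^3+1$ points meeting every line in exactly $1$ or $q+1$ points; a line meeting it in exactly one point is a tangent line. A fixed element $\xi\in\mathbb F_{q^2}\setminus\mathbb F_q$ is chosen; every $x\in\mathbb F_{q^2}$ is written uniquely as $x=x_0+x_1\xi$ with $x_0,x_1\in\mathbb F_q$, and $f(x)=f_0(x)+f_1(x)\xi$ with $f_0,f_1:\mathbb F_{q^2}\to\mathbb F_q$. *)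

theory Defs
  imports Main "HOL-Computational_Algebra.Primes"
begin

text \<open>The ambient field 'a plays the role of F_{q^2}; its subfield F_q is the
set of elements fixed by the q-th power (Frobenius) map.\<close>

definition subfield_q :: "nat \<Rightarrow> ('a::field) set" where
  "subfield_q q = {x. x ^ q = x}"

definition coord0 :: "nat \<Rightarrow> 'a::field \<Rightarrow> 'a \<Rightarrow> 'a" where
  "coord0 q \<xi> x = (THE a. a \<in> subfield_q q \<and> (\<exists>b\<in>subfield_q q. x = a + b * \<xi>))"

definition coord1 :: "nat \<Rightarrow> 'a::field \<Rightarrow> 'a \<Rightarrow> 'a" where
  "coord1 q \<xi> x = (THE b. b \<in> subfield_q q \<and> (\<exists>a\<in>subfield_q q. x = a + b * \<xi>))"

definition planar :: "('a::field \<Rightarrow> 'a) \<Rightarrow> bool" where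
  "planar f \<longleftrightarrow> (\<forall>a. a \<noteq> 0 \<longrightarrow> bij (\<lambda>x. f (x + a) - f x))"

datatype 'a point = Aff 'a 'a | Ideal 'a | IdealInf

datatype 'a line = Lab 'a 'a | Nl 'a | Linf

fun incident :: "('a::field \<Rightarrow> 'a) \<Rightarrow> 'a point \<Rightarrow> 'a line \<Rightarrow> bool" where
  "incident f (Aff x y) (Lab a b) = (y = f (x + a) - b)"
| "incident f (Ideal c) (Lab a b) = (c = a)"
| "incident f IdealInf (Lab a b) = False"
| "incident f (Aff x y) (Nl a) = (x = a)"
| "incident f (Ideal c) (Nl a) = False"
| "incident f IdealInf (Nl a) = True"
| "incident f (Aff x y) Linf = False"
| "incident f (Ideal c) Linf = True"
| "incident f IdealInf Linf = True"

definition points_on :: "('a::field \<Rightarrow> 'a) \<Rightarrow> 'a line \<Rightarrow> 'a point set" where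
  "points_on f l = {p. incident f p l}"

definition unital :: "nat \<Rightarrow> ('a::field \<Rightarrow> 'a) \<Rightarrow> 'a point set \<Rightarrow> bool" where
  "unital q f U \<longleftrightarrow> finite U \<and> card U = q ^ 3 + 1 \<and>
     (\<forall>l. card (U \<inter> points_on f l) = 1 \<or> card (U \<inter> points_on f l) = q + 1)"

definition tangent_line :: "('a::field \<Rightarrow> 'a) \<Rightarrow> 'a point set \<Rightarrow> 'a line \<Rightarrow> bool" where
  "tangent_line f U l \<longleftrightarrow> card (U \<inter> points_on f l) = 1"

definition U_theta :: "nat \<Rightarrow> 'a::field \<Rightarrow> 'a point set" where
  "U_theta q \<theta> = {Aff x (t * \<theta>) | x t. t \<in> subfield_q q} \<union> {IdealInf}"

end

theory Submission
  imports Defs "HOL-Number_Theory.Residues" "HOL-Computational_Algebra.Polynomial"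
begin

text \<open>
  The map \<open>y \<mapsto> \<theta>\<^sub>1 y\<^sub>0 - \<theta>\<^sub>0 y\<^sub>1\<close> is
  \<open>F\<^sub>q\<close>-linear with kernel the \<open>F\<^sub>q\<close>-line \<open>F\<^sub>q \<theta>\<close>, so an affine point \<open>(x, y)\<close> lies in
  \<open>\<U>\<^sub>\<theta>\<close> iff this functional vanishes at \<open>y\<close>. On the line \<open>L\<^sub>a\<^sub>,\<^sub>b\<close> the points of
  \<open>\<U>\<^sub>\<theta>\<close> are then, after the translation \<open>x \<mapsto> x + a\<close>, the solutions of
  \<open>\<theta>\<^sub>1 f\<^sub>0(x) - \<theta>\<^sub>0 f\<^sub>1(x) = \<theta>\<^sub>1 b\<^sub>0 - \<theta>\<^sub>0 b\<^sub>1\<close>, whose number is \<open>q + 1\<close> or \<open>1\<close> by hypothesis.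
  Lines \<open>N\<^sub>a\<close> meet \<open>\<U>\<^sub>\<theta>\<close> in \<open>(\<infinity>)\<close> and the \<open>q\<close> points \<open>(a, t\<theta>)\<close>, and \<open>L\<^sub>\<infinity>\<close> only in \<open>(\<infinity>)\<close>.
\<close>

lemma card_roots_power_eq_mult_le:
  fixes c :: "'a::field"
  assumes "n \<ge> 2"
  shows "card {x::'a. x ^ n = c * x} \<le> n"
proof -
  let ?P = "monom (1::'a) n - [:0, c:]"
  have "coeff ?P n = 1" using assms by (simp add: coeff_pCons split: nat.splits)
  hence "?P \<noteq> 0" by (metis coeff_0 zero_neq_one)
  hence "card {x. poly ?P x = 0} \<le> degree ?P"
    by (rule card_poly_roots_bound)
  also have "degree ?P \<le> n"
    by (rule degree_diff_le) (use assms in \<open>auto simp: degree_monom_eq\<close>)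
  also have "{x. poly ?P x = 0} = {x. x ^ n = c * x}"
    by (auto simp: poly_monom)
  finally show ?thesis .
qed

lemma finite_field_power_card:
  fixes x :: "'a::{field,finite}"
  shows "x ^ card (UNIV :: 'a set) = x"
proof -
  have "card (UNIV :: 'a set) > 0"
    by (simp add: finite_UNIV_card_ge_0)
  then obtain m where m: "card (UNIV :: 'a set) = Suc m"
    using gr0_implies_Suc by blast
  have "x ^ m = 1" if "x \<noteq> 0"
  proof -
    define G where "G = \<lparr>carrier = UNIV - {0::'a}, monoid.mult = (*) :: 'a \<Rightarrow> 'a \<Rightarrow> 'a, one = 1\<rparr>"
    have "group G"
    proof (rule groupI)
      fix y assume "y \<in> carrier G"
      thus "\<exists>z\<in>carrier G. z \<otimes>\<^bsub>G\<^esub> y = \<one>\<^bsub>G\<^esub>"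
        by (intro bexI[of _ "inverse y"]) (auto simp: G_def)
    qed (auto simp: G_def mult.assoc)
    moreover have "x \<in> carrier G" using that by (simp add: G_def)
    ultimately have "x [^]\<^bsub>G\<^esub> Coset.order G = \<one>\<^bsub>G\<^esub>"
      by (rule group.pow_order_eq_1)
    moreover have "Coset.order G = m"
      using m by (simp add: Coset.order_def G_def card_Diff_singleton)
    moreover have "x [^]\<^bsub>G\<^esub> n = x ^ n" for n :: nat
      by (induction n) (simp_all add: G_def)
    ultimately show ?thesis by (simp add: G_def)
  qed
  thus ?thesis using m by (cases "x = 0") simp_all
qed

lemma CHAR_eq_prime_of_card:
  assumes "prime p" "card (UNIV :: 'a::{field,finite} set) = p ^ n"
  shows "CHAR('a) = p"
proof -
  have "prime CHAR('a)"
    by (rule prime_CHAR_semidom[OF finite_imp_CHAR_pos]) simp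
  moreover have "CHAR('a) dvd p ^ n"
    using CHAR_dvd_CARD[where ?'a = 'a] assms(2) by simp
  ultimately have "CHAR('a) dvd p"
    using prime_dvd_power by blast
  with \<open>prime CHAR('a)\<close> show ?thesis using assms(1) primes_dvd_imp_eq by blast
qed

lemma Ideal_notin_U_theta [simp]: "Ideal a \<notin> U_theta q \<theta>"
  and IdealInf_mem_U_theta [simp]: "IdealInf \<in> U_theta q \<theta>"
  by (auto simp: U_theta_def)

lemma card_U_theta:
  fixes \<theta> :: "'a::{field,finite}"
  assumes "\<theta> \<noteq> 0"
  shows "card (U_theta q \<theta>) = card (UNIV :: 'a set) * card (subfield_q q :: 'a set) + 1"
proof -
  let ?g = "\<lambda>(x, t). Aff x (t * \<theta>)"
  have "U_theta q \<theta> = insert IdealInf (?g ` (UNIV \<times> subfield_q q))"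
    by (auto simp: U_theta_def)
  moreover have "IdealInf \<notin> ?g ` (UNIV \<times> subfield_q q)" by auto
  moreover have "finite ((UNIV :: 'a set) \<times> (subfield_q q :: 'a set))" by simp
  moreover have "inj_on ?g (UNIV \<times> subfield_q q)"
    using assms by (auto simp: inj_on_def)
  ultimately show ?thesis
    by (simp add: card_image card_cartesian_product)
qed

lemma U_theta_inter_Nl:
  "U_theta q \<theta> \<inter> points_on f (Nl a) = insert IdealInf ((\<lambda>t. Aff a (t * \<theta>)) ` subfield_q q)"
  by (auto simp: U_theta_def points_on_def elim: incident.elims)

lemma card_U_theta_inter_Nl:
  fixes \<theta> :: "'a::{field,finite}"
  assumes "\<theta> \<noteq> 0"
  shows "card (U_theta q \<theta> \<inter> points_on f (Nl a)) = card (subfield_q q :: 'a set) + 1"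
proof -
  have "inj_on (\<lambda>t. Aff a (t * \<theta>)) (subfield_q q)"
    using assms by (auto simp: inj_on_def)
  moreover have "IdealInf \<notin> (\<lambda>t. Aff a (t * \<theta>)) ` subfield_q q" by auto
  ultimately show ?thesis
    unfolding U_theta_inter_Nl by (simp add: card_image)
qed

lemma U_theta_inter_Linf: "U_theta q \<theta> \<inter> points_on f Linf = {IdealInf}"
  by (auto simp: U_theta_def points_on_def elim: incident.elims)

locale quadratic_extension =
  fixes q :: nat and \<xi> :: "'a::{field,finite}"
  assumes q_prime_power: "\<exists>p k. prime p \<and> k > 0 \<and> q = p ^ k"
    and card_UNIV: "card (UNIV :: 'a set) = q ^ 2"
    and xi_notin_subfield: "\<xi> \<notin> subfield_q q"
begin

abbreviation F :: "'a set" where "F \<equiv> subfield_q q"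

lemma q_ge_2: "q \<ge> 2"
proof -
  obtain p k where p: "prime p" "k > 0" "q = p ^ k" using q_prime_power by blast
  have "2 \<le> p" using p(1) by (rule prime_ge_2_nat)
  also have "p \<le> p ^ k" using p(2) \<open>2 \<le> p\<close> by (intro self_le_power) simp_all
  finally show ?thesis using p(3) by simp
qed

lemma frobenius_add: "(x + y :: 'a) ^ q = x ^ q + y ^ q"
proof -
  obtain p k where pk: "prime p" "q = p ^ k" using q_prime_power by blast
  have "card (UNIV :: 'a set) = p ^ (k * 2)"
    using card_UNIV unfolding pk(2) power_mult .
  hence "CHAR('a) = p" by (rule CHAR_eq_prime_of_card[OF pk(1)])
  show ?thesis by (rule freshmans_dream'[where n = k]) (simp_all add: \<open>CHAR('a) = p\<close> pk)
qed

lemma frobenius_diff: "(x - y :: 'a) ^ q = x ^ q - y ^ q"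
  using frobenius_add[of "x - y" y] unfolding diff_add_cancel by (subst eq_diff_eq) (rule sym)

lemma frobenius_involution: "((x :: 'a) ^ q) ^ q = x"
  using finite_field_power_card[of x] card_UNIV by (simp add: power2_eq_square power_mult)

lemma mem_subfield_q: "x \<in> F \<longleftrightarrow> x ^ q = x"
  by (simp add: subfield_q_def)

lemma subfield_q_diff: "x \<in> F \<Longrightarrow> y \<in> F \<Longrightarrow> x - y \<in> F"
  by (simp add: mem_subfield_q frobenius_diff)

lemma subfield_q_mult: "x \<in> F \<Longrightarrow> y \<in> F \<Longrightarrow> x * y \<in> F"
  by (simp add: mem_subfield_q power_mult_distrib)

lemma subfield_q_divide: "x \<in> F \<Longrightarrow> y \<in> F \<Longrightarrow> x / y \<in> F"
  by (simp add: mem_subfield_q power_divide)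

text \<open>
  \<open>\<phi>(x) = x\<^sup>q - x\<close> is additive with kernel \<open>F\<close>, and its image consists of roots of
  \<open>y\<^sup>q = -y\<close>; so \<open>q\<^sup>2 = |image| \<cdot> |F| \<le> q |F|\<close>.
\<close>
lemma card_subfield_q: "card F = q"
proof (rule antisym)
  show "card F \<le> q"
    using card_roots_power_eq_mult_le[OF q_ge_2, of "1::'a"] by (simp add: subfield_q_def)
next
  define \<phi> where "\<phi> x = x ^ q - x" for x :: 'a
  have card_fibre: "card {x. \<phi> x = y} = card F" if "y \<in> range \<phi>" for y
  proof -
    obtain x0 where y: "y = \<phi> x0" using \<open>y \<in> range \<phi>\<close> by blast
    have fibre_iff: "\<phi> x = y \<longleftrightarrow> x - x0 \<in> F" for x
    proof -
      have "\<phi> (x - x0) = \<phi> x - \<phi> x0"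
        by (simp add: \<phi>_def frobenius_diff)
      hence "\<phi> x = y \<longleftrightarrow> \<phi> (x - x0) = 0" using y by simp
      also have "\<dots> \<longleftrightarrow> x - x0 \<in> F" by (simp add: \<phi>_def mem_subfield_q)
      finally show ?thesis .
    qed
    have "{x. \<phi> x = y} = (\<lambda>z. z + x0) ` F"
    proof (intro equalityI subsetI)
      fix x assume "x \<in> {x. \<phi> x = y}"
      hence "x - x0 \<in> F" using fibre_iff by simp
      thus "x \<in> (\<lambda>z. z + x0) ` F" by (rule rev_image_eqI) simp
    qed (auto simp: fibre_iff)
    thus ?thesis by (simp add: card_image)
  qed
  have "card (range \<phi>) \<le> card {y::'a. y ^ q = (-1) * y}"
    by (rule card_mono[OF finite]) (auto simp: \<phi>_def frobenius_diff frobenius_involution)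
  also have "\<dots> \<le> q"
    by (rule card_roots_power_eq_mult_le[OF q_ge_2])
  finally have "card (range \<phi>) \<le> q" .
  have "q * q = card (UNIV :: 'a set)"
    using card_UNIV by (simp add: power2_eq_square)
  also have "\<dots> = card (\<Union>y\<in>range \<phi>. {x. \<phi> x = y})"
    by (rule arg_cong[where f = card]) auto
  also have "\<dots> = (\<Sum>y\<in>range \<phi>. card {x. \<phi> x = y})"
    by (rule card_UN_disjoint) auto
  also have "\<dots> = card (range \<phi>) * card F"
    using card_fibre by simp
  also have "\<dots> \<le> q * card F"
    using \<open>card (range \<phi>) \<le> q\<close> by simp
  finally show "q \<le> card F" using q_ge_2 by simp
qed

lemma subfield_q_decomposition_unique:
  assumes "a \<in> F" "b \<in> F" "a' \<in> F" "b' \<in> F" "a + b * \<xi> = a' + b' * \<xi>"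
  shows "a = a' \<and> b = b'"
proof (cases "b = b'")
  case False
  have "(b' - b) * \<xi> = a - a'"
    using assms(5) by (simp add: algebra_simps)
  hence "\<xi> = (a - a') / (b' - b)"
    using False by (simp add: eq_divide_eq mult.commute)
  moreover have "(a - a') / (b' - b) \<in> F"
    using assms by (simp add: subfield_q_divide subfield_q_diff)
  ultimately show ?thesis using xi_notin_subfield by simp
qed (use assms in simp)

lemma subfield_q_decomposition_exists: "\<exists>a\<in>F. \<exists>b\<in>F. x = a + b * \<xi>"
proof -
  let ?h = "\<lambda>p. fst p + snd p * \<xi>"
  have "inj_on ?h (F \<times> F)"
    using subfield_q_decomposition_unique by (auto simp: inj_on_def prod_eq_iff)
  hence "card (?h ` (F \<times> F)) = card (UNIV :: 'a set)"
    using card_subfield_q card_UNIV by (simp add: card_image card_cartesian_product power2_eq_square)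
  hence "?h ` (F \<times> F) = UNIV"
    by (rule card_eq_UNIV_imp_eq_UNIV[OF finite_UNIV])
  hence "x \<in> ?h ` (F \<times> F)" by simp
  then obtain p where "x = ?h p" "p \<in> F \<times> F"
    by (rule imageE)
  hence "fst p \<in> F" "snd p \<in> F" "x = fst p + snd p * \<xi>"
    by (auto simp: mem_Times_iff)
  thus ?thesis by blast
qed

lemma coord_eq:
  assumes "a \<in> F" "b \<in> F" "x = a + b * \<xi>"
  shows "coord0 q \<xi> x = a" "coord1 q \<xi> x = b"
proof -
  have unique: "a' = a \<and> b' = b" if "a' \<in> F" "b' \<in> F" "x = a' + b' * \<xi>" for a' b'
  proof (rule subfield_q_decomposition_unique[OF that(1,2) assms(1,2)])
    show "a' + b' * \<xi> = a + b * \<xi>" using that(3) assms(3) by (rule trans[OF sym])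
  qed
  show "coord0 q \<xi> x = a"
    unfolding coord0_def
  proof (rule the_equality)
    show "a \<in> F \<and> (\<exists>b\<in>F. x = a + b * \<xi>)" using assms by blast
  next
    fix a' assume "a' \<in> F \<and> (\<exists>b'\<in>F. x = a' + b' * \<xi>)"
    thus "a' = a" using unique by blast
  qed
  show "coord1 q \<xi> x = b"
    unfolding coord1_def
  proof (rule the_equality)
    show "b \<in> F \<and> (\<exists>a\<in>F. x = a + b * \<xi>)" using assms by blast
  next
    fix b' assume "b' \<in> F \<and> (\<exists>a'\<in>F. x = a' + b' * \<xi>)"
    thus "b' = b" using unique by blast
  qed
qed

lemma coord_mem: "coord0 q \<xi> x \<in> F" "coord1 q \<xi> x \<in> F"
  and coord_decomposition: "x = coord0 q \<xi> x + coord1 q \<xi> x * \<xi>"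
proof -
  obtain a b where ab: "a \<in> F" "b \<in> F" "x = a + b * \<xi>"
    using subfield_q_decomposition_exists by blast
  show "coord0 q \<xi> x \<in> F" "coord1 q \<xi> x \<in> F" "x = coord0 q \<xi> x + coord1 q \<xi> x * \<xi>"
    using coord_eq[OF ab] ab by simp_all
qed

lemma coord_diff:
  "coord0 q \<xi> (x - y) = coord0 q \<xi> x - coord0 q \<xi> y"
  "coord1 q \<xi> (x - y) = coord1 q \<xi> x - coord1 q \<xi> y"
proof -
  have "x - y = (coord0 q \<xi> x - coord0 q \<xi> y) + (coord1 q \<xi> x - coord1 q \<xi> y) * \<xi>"
    by (subst (1 2) coord_decomposition) (simp add: algebra_simps)
  moreover have "coord0 q \<xi> x - coord0 q \<xi> y \<in> F" "coord1 q \<xi> x - coord1 q \<xi> y \<in> F"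
    by (intro subfield_q_diff coord_mem)+
  ultimately show "coord0 q \<xi> (x - y) = coord0 q \<xi> x - coord0 q \<xi> y"
    "coord1 q \<xi> (x - y) = coord1 q \<xi> x - coord1 q \<xi> y"
    using coord_eq by blast+
qed

definition coord_det :: "'a \<Rightarrow> 'a \<Rightarrow> 'a" where
  "coord_det \<theta> y = coord1 q \<xi> \<theta> * coord0 q \<xi> y - coord0 q \<xi> \<theta> * coord1 q \<xi> y"

lemma coord_det_mem: "coord_det \<theta> y \<in> F"
  unfolding coord_det_def by (intro subfield_q_diff subfield_q_mult coord_mem)

lemma coord_det_diff: "coord_det \<theta> (x - y) = coord_det \<theta> x - coord_det \<theta> y"
  unfolding coord_det_def coord_diff by (simp add: algebra_simps)

lemma coord_det_eq_0_iff:
  assumes "\<theta> \<noteq> 0"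
  shows "coord_det \<theta> y = 0 \<longleftrightarrow> (\<exists>t\<in>F. y = t * \<theta>)"
proof
  assume "\<exists>t\<in>F. y = t * \<theta>"
  then obtain t where t: "t \<in> F" "y = t * \<theta>" by blast
  hence "y = t * coord0 q \<xi> \<theta> + (t * coord1 q \<xi> \<theta>) * \<xi>"
    by (subst (asm) coord_decomposition) (simp add: algebra_simps)
  moreover have "t * coord0 q \<xi> \<theta> \<in> F" "t * coord1 q \<xi> \<theta> \<in> F"
    by (intro subfield_q_mult t(1) coord_mem)+
  ultimately have "coord0 q \<xi> y = t * coord0 q \<xi> \<theta>" "coord1 q \<xi> y = t * coord1 q \<xi> \<theta>"
    using coord_eq by blast+
  thus "coord_det \<theta> y = 0" by (simp add: coord_det_def)
next
  assume det: "coord_det \<theta> y = 0"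
  let ?t0 = "coord0 q \<xi> \<theta>" and ?t1 = "coord1 q \<xi> \<theta>"
  let ?y0 = "coord0 q \<xi> y" and ?y1 = "coord1 q \<xi> y"
  have cross: "?t1 * ?y0 = ?t0 * ?y1" using det by (simp add: coord_det_def)
  have \<theta>: "\<theta> = ?t0 + ?t1 * \<xi>" and y: "y = ?y0 + ?y1 * \<xi>"
    by (rule coord_decomposition)+
  show "\<exists>t\<in>F. y = t * \<theta>"
  proof (cases "?t1 = 0")
    case False
    have "y = (?y1 / ?t1) * \<theta>"
      using False cross by (subst \<theta>, subst y) (simp add: field_simps)
    thus ?thesis using subfield_q_divide coord_mem by blast
  next
    case True
    hence "?t0 \<noteq> 0" using \<theta> assms by auto
    hence "y = (?y0 / ?t0) * \<theta>"
      using True cross by (subst \<theta>, subst y) (simp add: field_simps)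
    thus ?thesis using subfield_q_divide coord_mem by blast
  qed
qed

lemma Aff_mem_U_theta_iff: "\<theta> \<noteq> 0 \<Longrightarrow> Aff x y \<in> U_theta q \<theta> \<longleftrightarrow> coord_det \<theta> y = 0"
  by (auto simp: U_theta_def coord_det_eq_0_iff)

lemma card_U_theta_inter_Lab:
  assumes "\<theta> \<noteq> 0"
  shows "card (U_theta q \<theta> \<inter> points_on f (Lab a b)) = card {x. coord_det \<theta> (f x) = coord_det \<theta> b}"
proof -
  have "U_theta q \<theta> \<inter> points_on f (Lab a b) =
      (\<lambda>x. Aff x (f (x + a) - b)) ` {x. coord_det \<theta> (f (x + a) - b) = 0}"
  proof (rule Set.set_eqI)
    fix p show "p \<in> U_theta q \<theta> \<inter> points_on f (Lab a b) \<longleftrightarrow>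
        p \<in> (\<lambda>x. Aff x (f (x + a) - b)) ` {x. coord_det \<theta> (f (x + a) - b) = 0}"
      by (cases p) (auto simp: points_on_def Aff_mem_U_theta_iff[OF assms])
  qed
  hence "card (U_theta q \<theta> \<inter> points_on f (Lab a b)) = card {x. coord_det \<theta> (f (x + a)) = coord_det \<theta> b}"
    by (simp add: card_image inj_on_def coord_det_diff)
  also have "{x. coord_det \<theta> (f (x + a)) = coord_det \<theta> b} =
      (\<lambda>x. x - a) ` {x. coord_det \<theta> (f x) = coord_det \<theta> b}"
  proof (intro equalityI subsetI)
    fix x assume "x \<in> {x. coord_det \<theta> (f (x + a)) = coord_det \<theta> b}"
    thus "x \<in> (\<lambda>x. x - a) ` {x. coord_det \<theta> (f x) = coord_det \<theta> b}"
      by (intro image_eqI[of _ _ "x + a"]) auto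
  qed auto
  also have "card \<dots> = card {x. coord_det \<theta> (f x) = coord_det \<theta> b}"
    by (simp add: card_image inj_on_def)
  finally show ?thesis .
qed

end

theorem proposition2p2:
  fixes f :: "'a::{field,finite} \<Rightarrow> 'a" and q :: nat and \<xi> \<theta> :: 'a
  assumes "\<exists>p k. prime p \<and> k > 0 \<and> q = p ^ k"
    and "odd q"
    and "card (UNIV :: 'a set) = q ^ 2"
    and "\<xi> \<notin> subfield_q q"
    and "planar f"
    and "\<theta> \<noteq> 0"
    and "\<forall>c\<in>subfield_q q.
           card {x. coord1 q \<xi> \<theta> * coord0 q \<xi> (f x) - coord0 q \<xi> \<theta> * coord1 q \<xi> (f x) = c}
           = (if c \<noteq> 0 then q + 1 else 1)"
  shows "unital q f (U_theta q \<theta>) \<and>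
         (\<forall>a b. tangent_line f (U_theta q \<theta>) (Lab a b) \<longleftrightarrow>
                coord0 q \<xi> b * coord1 q \<xi> \<theta> - coord1 q \<xi> b * coord0 q \<xi> \<theta> = 0)"
proof -
  interpret quadratic_extension q \<xi> using assms(1,3,4) by unfold_locales
  note \<theta> = \<open>\<theta> \<noteq> 0\<close>
  have card_Lab: "card (U_theta q \<theta> \<inter> points_on f (Lab a b)) = (if coord_det \<theta> b \<noteq> 0 then q + 1 else 1)"
    for a b
    using card_U_theta_inter_Lab[OF \<theta>] assms(7) coord_det_mem by (simp add: coord_det_def)
  have "unital q f (U_theta q \<theta>)"
    unfolding unital_def
  proof (intro conjI allI)
    show "card (U_theta q \<theta>) = q ^ 3 + 1"
      using card_U_theta[OF \<theta>] card_UNIV card_subfield_q by (simp add: power2_eq_square power3_eq_cube)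
    thus "finite (U_theta q \<theta>)" by (intro card_ge_0_finite) simp
    fix l show "card (U_theta q \<theta> \<inter> points_on f l) = 1 \<or> card (U_theta q \<theta> \<inter> points_on f l) = q + 1"
      by (cases l) (simp_all add: card_Lab card_U_theta_inter_Nl[OF \<theta>] U_theta_inter_Linf card_subfield_q)
  qed
  moreover have "coord0 q \<xi> b * coord1 q \<xi> \<theta> - coord1 q \<xi> b * coord0 q \<xi> \<theta> = coord_det \<theta> b" for b
    by (simp add: coord_det_def mult.commute)
  ultimately show ?thesis
    using q_ge_2 by (simp add: tangent_line_def card_Lab)
qed

end
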